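(* Let $G$ be a graph of order $p$ with $1\le\delta(G)\le p-2$. If $G$ has a $d$-sequence $\{\mathcal G_i\}_{i=1}^s$ such that $z_i(G)\ge 0$ for all $2\le i\le s$, then $str(G)\le p+d_G$. Moreover, equality holds if $d_G=\delta(G)$.
   Context: For a graph $G$ of order $p$, a numbering of $G$ is a bijection $f:V(G)\to[1,p]$ ($[a,b]$ is the set of integers from $a$ to $b$). The strength of a numbering $f$ is $str_f(G)=\max\{f(u)+f(v): uv\in E(G)\}$, and $str(G)=\min\{str_f(G): f \text{ a numbering of } G\}$. $\delta(G)$ denotes the minimum degree; $G+H$ denotes disjoint union; $mK_1$ is the edgeless graph on $m$ vertices; $K_r$ the complete graph. $d$-sequence: Let $G$ have order $p$ with $1\le\delta(G)\le p-2$. Set $\mathcal G_1=G_1=G$, $m_1=0$. For each $i$, write $\mathcal G_i=m_iK_1+G_i$, where $m_i\ge0$ is the number of isolated vertices of $\mathcal G_i$ and $G_i$ has no isolated vertices. If $\mathcal G_i$ is neither of the form $mK_1$ ($m\ge1$) nor $mK_1+K_r$ ($m\ge0$, $r\ge2$), choose any vertex $u_i$ of $G_i$, put $d_i=\deg_{G_i}(u_i)$, and let $\mathcal G_{i+1}$ be obtained from $G_i$ by deleting $u_i$ together with all its neighbours in $G_i$. Stop at the first index $s$ ($s\ge 2$) for which $\mathcal G_s$ is $m_sK_1$ with $m_s\ge1$ (then set $d_s=0$) or $m_sK_1+K_r$ with $m_s\ge0$, $r\ge2$ (then $d_s=r-1$). The sequence $\{\mathcal G_i\}_{i=1}^s$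 is a $d$-sequence of $G$. Write $d_G=d_1$, $y_j(G)=m_j+1-d_j$ and $z_i(G)=\sum_{j=2}^i y_j(G)$ for $2\le i\le s$. *)

theory Defs
  imports Main
begin

definition simple_graph :: "'a set \<Rightarrow> 'a set set \<Rightarrow> bool" where
  "simple_graph V E \<longleftrightarrow> finite V \<and> (\<forall>e\<in>E. \<exists>x y. x \<in> V \<and> y \<in> V \<and> x \<noteq> y \<and> e = {x, y})"

definition nbrs :: "'a set set \<Rightarrow> 'a set \<Rightarrow> 'a \<Rightarrow> 'a set" where
  "nbrs E W v = {w \<in> W. {v, w} \<in> E}"

definition deg :: "'a set set \<Rightarrow> 'a set \<Rightarrow> 'a \<Rightarrow> nat" where
  "deg E W v = card (nbrs E W v)"

definition min_degree :: "'a set \<Rightarrow> 'a set set \<Rightarrow> nat" where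
  "min_degree V E = Min (deg E V ` V)"

definition isol :: "'a set set \<Rightarrow> 'a set \<Rightarrow> 'a set" where
  "isol E W = {v \<in> W. nbrs E W v = {}}"

definition core :: "'a set set \<Rightarrow> 'a set \<Rightarrow> 'a set" where
  "core E W = W - isol E W"

definition is_mK1 :: "'a set set \<Rightarrow> 'a set \<Rightarrow> bool" where
  "is_mK1 E W \<longleftrightarrow> W \<noteq> {} \<and> core E W = {}"

text \<open>Induced subgraph on W is m K_1 + K_r with m \<ge> 0, r \<ge> 2 (r = card (core E W)).\<close>
definition is_mK1_Kr :: "'a set set \<Rightarrow> 'a set \<Rightarrow> bool" where
  "is_mK1_Kr E W \<longleftrightarrow> card (core E W) \<ge> 2 \<and>
     (\<forall>x\<in>core E W. \<forall>y\<in>core E W. x \<noteq> y \<longrightarrow> {x, y} \<in> E)"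

definition numbering :: "'a set \<Rightarrow> ('a \<Rightarrow> nat) \<Rightarrow> bool" where
  "numbering V f \<longleftrightarrow> bij_betw f V {1..card V}"

definition strength_of :: "'a set set \<Rightarrow> ('a \<Rightarrow> nat) \<Rightarrow> nat" where
  "strength_of E f = Max {f x + f y | x y. {x, y} \<in> E}"

definition strength :: "'a set \<Rightarrow> 'a set set \<Rightarrow> nat" where
  "strength V E = Min {strength_of E f | f. numbering V f}"

text \<open>d-sequence: \<G>_i is the induced subgraph on W i (i = 1..s), u i (i < s) the chosen vertex.
  \<G>_{i+1} is obtained from G_i = \<G>_i minus its isolated vertices by deleting u_i and its neighbours.\<close>
definition d_sequence :: "'a set \<Rightarrow> 'a set set \<Rightarrow> nat \<Rightarrow> (nat \<Rightarrow> 'a set) \<Rightarrow> (nat \<Rightarrow> 'a) \<Rightarrow> bool" where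
  "d_sequence V E s W u \<longleftrightarrow> 2 \<le> s \<and> W 1 = V \<and>
     (\<forall>i. 1 \<le> i \<and> i < s \<longrightarrow>
        \<not> is_mK1 E (W i) \<and> \<not> is_mK1_Kr E (W i) \<and>
        u i \<in> core E (W i) \<and>
        W (Suc i) = core E (W i) - ({u i} \<union> nbrs E (core E (W i)) (u i))) \<and>
     (is_mK1 E (W s) \<or> is_mK1_Kr E (W s))"

definition dseq_m :: "'a set set \<Rightarrow> (nat \<Rightarrow> 'a set) \<Rightarrow> nat \<Rightarrow> nat" where
  "dseq_m E W i = card (isol E (W i))"

definition dseq_d :: "'a set set \<Rightarrow> nat \<Rightarrow> (nat \<Rightarrow> 'a set) \<Rightarrow> (nat \<Rightarrow> 'a) \<Rightarrow> nat \<Rightarrow> nat" where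
  "dseq_d E s W u i =
     (if i < s then deg E (core E (W i)) (u i)
      else if is_mK1 E (W s) then 0 else card (core E (W s)) - 1)"

definition dseq_y :: "'a set set \<Rightarrow> nat \<Rightarrow> (nat \<Rightarrow> 'a set) \<Rightarrow> (nat \<Rightarrow> 'a) \<Rightarrow> nat \<Rightarrow> int" where
  "dseq_y E s W u j = int (dseq_m E W j) + 1 - int (dseq_d E s W u j)"

definition dseq_z :: "'a set set \<Rightarrow> nat \<Rightarrow> (nat \<Rightarrow> 'a set) \<Rightarrow> (nat \<Rightarrow> 'a) \<Rightarrow> nat \<Rightarrow> int" where
  "dseq_z E s W u i = (\<Sum>j=2..i. dseq_y E s W u j)"

end

theory Submission
  imports Defs
begin

(* Lower bound: in any numbering, the vertex labelled p has at least \<delta>(G) neighbours, and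
   these carry distinct positive labels, so one of them is labelled at least \<delta>(G).

   Upper bound: number the graphs of the d-sequence from the last one backwards.  In \<G>_i the
   neighbours N of u_i get the smallest labels, \<G>_(i+1) the next ones, then u_i, and the
   m_i isolated vertices the largest.  An edge at u_i or in N then has label sum at most
   |G_i| + d_i, while an edge inside \<G>_(i+1) gains 2 d_i on its bound there.  Starting from
   the bound p + d_G on \<G>_1, the step at i uses up y_i of the slack, so z_i \<ge> 0 is exactly
   what keeps every bound valid; on the final m K_1 + K_r the clique is labelled first. *)

lemma simple_graph_edgeD:
  assumes "simple_graph V E" "{x, y} \<in> E"
  shows "x \<in> V" "y \<in> V" "x \<noteq> y"
proof -
  obtain a b where "a \<in> V" "b \<in> V" "a \<noteq> b" "{x, y} = {a, b}"
    using assms unfolding simple_graph_def by blast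
  then show "x \<in> V" "y \<in> V" "x \<noteq> y" by (auto simp: doubleton_eq_iff)
qed

lemma simple_graph_finite: "simple_graph V E \<Longrightarrow> W \<subseteq> V \<Longrightarrow> finite W"
  unfolding simple_graph_def by (auto intro: finite_subset)

lemma min_degree_le_deg: "finite V \<Longrightarrow> x \<in> V \<Longrightarrow> min_degree V E \<le> deg E V x"
  unfolding min_degree_def by simp

lemma edges_nonempty_of_min_degree:
  assumes "simple_graph V E" "V \<noteq> {}" "1 \<le> min_degree V E"
  shows "E \<noteq> {}"
proof -
  obtain x where "x \<in> V" using assms(2) by blast
  then have "nbrs E V x \<noteq> {}"
    using min_degree_le_deg[of V x E] assms(1,3) by (auto simp: deg_def simple_graph_def)
  then show ?thesis by (auto simp: nbrs_def)
qed

lemma ex_numbering: "finite A \<Longrightarrow> \<exists>f. numbering A f"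
  unfolding numbering_def by (metis bij_betw_iff_card card_atLeastAtMost diff_Suc_1 finite_atLeastAtMost)

lemma numbering_le_card: "numbering A f \<Longrightarrow> x \<in> A \<Longrightarrow> f x \<le> card A"
  unfolding numbering_def using bij_betw_apply by fastforce

lemma numbering_Un:
  assumes "finite A" "finite B" "A \<inter> B = {}" and f: "numbering A f" and h: "numbering B h"
  shows "numbering (A \<union> B) (\<lambda>x. if x \<in> A then f x else card A + h x)"
proof -
  have "bij_betw ((+) (card A) \<circ> h) B {card A + 1..card A + card B}"
    using h unfolding numbering_def by (rule bij_betw_trans) (simp add: add.commute)
  then have hB: "bij_betw (\<lambda>x. if x \<in> A then f x else card A + h x) B {card A + 1..card A + card B}"
    using assms(3) by (subst bij_betw_cong[where g = "(+) (card A) \<circ> h"]) auto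
  have fA: "bij_betw (\<lambda>x. if x \<in> A then f x else card A + h x) A {1..card A}"
    using f unfolding numbering_def by (auto intro: bij_betw_cong[THEN iffD1])
  have "{1..card A} \<union> {card A + 1..card A + card B} = {1..card (A \<union> B)}"
    using assms(1-3) by (auto simp: card_Un_disjoint)
  then show ?thesis
    unfolding numbering_def using bij_betw_combine[OF fA hB] by auto
qed

lemma finite_edge_sums:
  assumes "simple_graph V E"
  shows "finite {f x + f y | x y. {x, y} \<in> E}"
proof -
  have "{f x + f y | x y. {x, y} \<in> E} \<subseteq> (\<lambda>(x, y). f x + f y) ` (V \<times> V)"
  proof
    fix n assume "n \<in> {f x + f y | x y. {x, y} \<in> E}"
    then obtain x y where "n = f x + f y" "{x, y} \<in> E" by blast
    moreover have "x \<in> V" "y \<in> V" using simple_graph_edgeD[OF assms \<open>{x, y} \<in> E\<close>] by auto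
    ultimately show "n \<in> (\<lambda>(x, y). f x + f y) ` (V \<times> V)" by (auto intro: image_eqI[of _ _ "(x, y)"])
  qed
  moreover have "finite ((\<lambda>(x, y). f x + f y) ` (V \<times> V))"
    using assms by (simp add: simple_graph_def)
  ultimately show ?thesis by (rule finite_subset)
qed

lemma edge_sum_le_strength_of:
  assumes "simple_graph V E" "{x, y} \<in> E"
  shows "f x + f y \<le> strength_of E f"
  unfolding strength_of_def using assms(2) by (intro Max_ge[OF finite_edge_sums[OF assms(1)]]) blast

lemma strength_of_le:
  assumes "simple_graph V E" "E \<noteq> {}" "\<And>x y. {x, y} \<in> E \<Longrightarrow> f x + f y \<le> B"
  shows "strength_of E f \<le> B"
proof -
  obtain e where "e \<in> E" using assms(2) by blast
  then obtain x y where "{x, y} \<in> E" using assms(1) unfolding simple_graph_def by metis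
  then show ?thesis
    unfolding strength_of_def using finite_edge_sums[OF assms(1)] assms(3) by (subst Max_le_iff) auto
qed

lemma finite_strengths:
  assumes "simple_graph V E" "E \<noteq> {}"
  shows "finite {strength_of E f | f. numbering V f}"
proof -
  have "strength_of E f \<le> 2 * card V" if "numbering V f" for f
    using numbering_le_card[OF that] simple_graph_edgeD[OF assms(1)]
    by (intro strength_of_le[OF assms]) (metis add_le_mono mult_2)
  then have "{strength_of E f | f. numbering V f} \<subseteq> {..2 * card V}" by auto
  then show ?thesis by (rule finite_subset) simp
qed

lemma strength_le_strength_of:
  assumes "simple_graph V E" "E \<noteq> {}" "numbering V f"
  shows "strength V E \<le> strength_of E f"
  unfolding strength_def using assms(3) by (intro Min_le finite_strengths[OF assms(1,2)]) blast

lemma strength_attained: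
  assumes "simple_graph V E" "E \<noteq> {}"
  shows "\<exists>f. numbering V f \<and> strength V E = strength_of E f"
proof -
  obtain f where "numbering V f" using ex_numbering assms(1) by (auto simp: simple_graph_def)
  then have "{strength_of E f | f. numbering V f} \<noteq> {}" by blast
  then show ?thesis
    using Min_in[OF finite_strengths[OF assms]] unfolding strength_def by auto
qed

lemma card_le_Max_of_pos:
  fixes A :: "nat set"
  assumes "finite A" "0 \<notin> A"
  shows "card A \<le> Max A"
proof (cases "A = {}")
  case False
  then have "A \<subseteq> {1..Max A}" using assms by (auto simp: Suc_le_eq gr0I)
  then show ?thesis using card_mono[of "{1..Max A}" A] by simp
qed simp

lemma strength_of_ge_min_degree:
  assumes sg: "simple_graph V E" and "V \<noteq> {}" and "1 \<le> min_degree V E" and g: "numbering V g"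
  shows "card V + min_degree V E \<le> strength_of E g"
proof -
  have "finite V" using sg by (simp add: simple_graph_def)
  have gV: "g ` V = {1..card V}" and inj: "inj_on g V"
    using g unfolding numbering_def bij_betw_def by blast+
  have "card V \<in> g ` V"
    using gV \<open>V \<noteq> {}\<close> \<open>finite V\<close> by (simp add: Suc_le_eq card_gt_0_iff)
  then obtain x where x: "x \<in> V" "g x = card V" by (metis imageE)
  define A where "A = nbrs E V x"
  have "A \<subseteq> V" "finite A" using \<open>finite V\<close> by (auto simp: A_def nbrs_def)
  have "min_degree V E \<le> card A"
    using min_degree_le_deg[OF \<open>finite V\<close> x(1)] by (simp add: A_def deg_def)
  also have "\<dots> = card (g ` A)"
    using card_image[OF inj_on_subset[OF inj \<open>A \<subseteq> V\<close>]] by simp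
  also have "\<dots> \<le> Max (g ` A)"
  proof (rule card_le_Max_of_pos)
    show "finite (g ` A)" using \<open>finite A\<close> by simp
    show "0 \<notin> g ` A" using image_mono[OF \<open>A \<subseteq> V\<close>, of g] gV by auto
  qed
  finally have "min_degree V E \<le> Max (g ` A)" .
  moreover have "A \<noteq> {}" using \<open>min_degree V E \<le> card A\<close> \<open>1 \<le> min_degree V E\<close> by auto
  then have "Max (g ` A) \<in> g ` A" using \<open>finite A\<close> by simp
  then obtain y where "y \<in> A" "g y = Max (g ` A)" by (metis imageE)
  moreover have "{x, y} \<in> E" using \<open>y \<in> A\<close> by (simp add: A_def nbrs_def)
  then have "g x + g y \<le> strength_of E g" by (rule edge_sum_le_strength_of[OF sg])
  ultimately show ?thesis using x(2) by linarith
qed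

lemma strength_ge_min_degree:
  assumes sg: "simple_graph V E" and "V \<noteq> {}" and "1 \<le> min_degree V E"
  shows "card V + min_degree V E \<le> strength V E"
proof -
  obtain g where "numbering V g" "strength V E = strength_of E g"
    using strength_attained[OF sg edges_nonempty_of_min_degree[OF assms]] by blast
  then show ?thesis using strength_of_ge_min_degree[OF assms] by simp
qed

lemma edge_in_core:
  assumes "x \<in> W" "y \<in> W" "{x, y} \<in> E"
  shows "x \<in> core E W"
  using assms by (auto simp: core_def isol_def nbrs_def)

lemma card_core_isol:
  assumes "finite W"
  shows "card W = card (core E W) + card (isol E W)"
proof -
  have "W = core E W \<union> isol E W" "core E W \<inter> isol E W = {}"
    by (auto simp: core_def isol_def)
  then show ?thesis using assms by (metis card_Un_disjoint finite_Un)
qed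

lemma card_core_split:
  assumes "simple_graph V E" "finite C" "a \<in> C"
  shows "card C = 1 + card (nbrs E C a) + card (C - ({a} \<union> nbrs E C a))"
proof -
  have "a \<notin> nbrs E C a" using simple_graph_edgeD(3)[OF assms(1), of a a] by (auto simp: nbrs_def)
  moreover have sub: "{a} \<union> nbrs E C a \<subseteq> C" using assms(3) by (auto simp: nbrs_def)
  moreover have "finite (nbrs E C a)" using assms(2) by (simp add: nbrs_def)
  ultimately show ?thesis
    using card_mono[OF assms(2) sub] card_Diff_subset[OF _ sub] by simp
qed

definition bounded_numbering :: "'a set set \<Rightarrow> 'a set \<Rightarrow> int \<Rightarrow> ('a \<Rightarrow> nat) \<Rightarrow> bool" where
  "bounded_numbering E W b g \<longleftrightarrow>
     numbering W g \<and> (\<forall>x\<in>W. \<forall>y\<in>W. {x, y} \<in> E \<longrightarrow> int (g x + g y) \<le> b)"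

lemma bounded_numbering_core_first:
  assumes sg: "simple_graph V E" and "W \<subseteq> V" and b: "2 * int (card (core E W)) - 1 \<le> b"
  shows "\<exists>g. bounded_numbering E W b g"
proof -
  define C I where "C = core E W" and "I = isol E W"
  have W: "W = C \<union> I" "C \<inter> I = {}" by (auto simp: C_def I_def core_def isol_def)
  have "finite W" using simple_graph_finite[OF sg \<open>W \<subseteq> V\<close>] .
  then have fin: "finite C" "finite I" using W(1) by auto
  obtain f h where f: "numbering C f" and "numbering I h" using ex_numbering fin by metis
  define g where "g x = (if x \<in> C then f x else card C + h x)" for x
  have "numbering W g"
    unfolding g_def W(1) by (rule numbering_Un[OF fin W(2) f \<open>numbering I h\<close>])
  moreover have "int (g x + g y) \<le> b" if "x \<in> W" "y \<in> W" "{x, y} \<in> E" for x y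
  proof -
    have "x \<in> C" "y \<in> C" using that edge_in_core[of x W y E] edge_in_core[of y W x E]
      by (auto simp: C_def insert_commute)
    moreover have "x \<noteq> y" using simple_graph_edgeD(3)[OF sg that(3)] .
    ultimately have "f x \<noteq> f y" "f x \<le> card C" "f y \<le> card C"
      using f numbering_le_card[OF f] unfolding numbering_def bij_betw_def inj_on_def by auto
    then show ?thesis using b \<open>x \<in> C\<close> \<open>y \<in> C\<close> by (simp add: g_def C_def)
  qed
  ultimately show ?thesis unfolding bounded_numbering_def by blast
qed

lemma bounded_numbering_extend:
  assumes sg: "simple_graph V E" and "W \<subseteq> V" and a: "a \<in> core E W"
    and g': "bounded_numbering E (core E W - ({a} \<union> nbrs E (core E W) a)) b' g'"
    and b_star: "int (card (core E W) + card (nbrs E (core E W) a)) \<le> b"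
    and b_rest: "2 * int (card (nbrs E (core E W) a)) + b' \<le> b"
  shows "\<exists>g. bounded_numbering E W b g"
proof -
  define C I N W' where "C = core E W" and "I = isol E W" and "N = nbrs E C a"
    and "W' = C - ({a} \<union> N)"
  have W: "W = C \<union> I" "C \<inter> I = {}" by (auto simp: C_def I_def core_def isol_def)
  have "finite W" using simple_graph_finite[OF sg \<open>W \<subseteq> V\<close>] .
  then have fin: "finite C" "finite I" "finite N" "finite W'"
    using W(1) by (auto simp: N_def nbrs_def W'_def)
  have "a \<notin> N" using simple_graph_edgeD(3)[OF sg, of a a] by (auto simp: N_def nbrs_def)
  then have C: "C = (N \<union> W') \<union> {a}" "N \<inter> W' = {}" "(N \<union> W') \<inter> {a} = {}"
    using a by (auto simp: C_def N_def W'_def nbrs_def)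
  obtain h k where h: "numbering N h" and k: "numbering I k" using ex_numbering fin by metis
  \<comment> \<open>labels: N, then W' shifted by |N|, then a (label |C|), then I\<close>
  have g'W': "numbering W' g'" using g' by (simp add: bounded_numbering_def W'_def N_def C_def)
  define g1 where "g1 x = (if x \<in> N then h x else card N + g' x)" for x
  define g2 where "g2 x = (if x \<in> N \<union> W' then g1 x else card (N \<union> W') + 1)" for x
  define g where "g x = (if x \<in> C then g2 x else card C + k x)" for x
  have "numbering (N \<union> W') g1"
    unfolding g1_def by (rule numbering_Un[OF fin(3,4) C(2) h g'W'])
  moreover have "numbering {a} (\<lambda>_. 1)" by (simp add: numbering_def)
  ultimately have "numbering C g2"
    unfolding g2_def C(1) using fin C(3) by (intro numbering_Un) auto
  then have "numbering W g"
    unfolding g_def W(1) by (rule numbering_Un[OF fin(1,2) W(2) _ k])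
  moreover have "int (g x + g y) \<le> b" if "x \<in> W" "y \<in> W" "{x, y} \<in> E" for x y
  proof -
    have "x \<in> C" "y \<in> C" using that edge_in_core[of x W y E] edge_in_core[of y W x E]
      by (auto simp: C_def insert_commute)
    have "x \<noteq> y" using simple_graph_edgeD(3)[OF sg that(3)] .
    have gN: "g z \<le> card N" if "z \<in> N" for z
      using that numbering_le_card[OF h] C by (simp add: g_def g2_def g1_def)
    have gC: "g z \<le> card C" if "z \<in> C" for z
      using that numbering_le_card[OF \<open>numbering C g2\<close>] by (simp add: g_def)
    show ?thesis
    proof (cases "x \<in> W' \<and> y \<in> W'")
      case True
      then have "g x + g y = 2 * card N + (g' x + g' y)"
        using C by (auto simp: g_def g2_def g1_def)
      moreover have "int (g' x + g' y) \<le> b'"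
        using g' True that(3) by (auto simp: bounded_numbering_def W'_def N_def C_def)
      ultimately show ?thesis using b_rest by (simp add: N_def C_def)
    next
      case False
      then have "x \<in> N \<or> y \<in> N \<or> x = a \<or> y = a"
        using \<open>x \<in> C\<close> \<open>y \<in> C\<close> by (auto simp: W'_def)
      moreover have "y \<in> N" if "x = a"
        using that \<open>y \<in> C\<close> \<open>{x, y} \<in> E\<close> by (simp add: N_def nbrs_def)
      moreover have "x \<in> N" if "y = a"
        using that \<open>x \<in> C\<close> \<open>{x, y} \<in> E\<close> by (simp add: N_def nbrs_def insert_commute)
      ultimately have "(g x \<le> card N \<and> g y \<le> card C) \<or> (g y \<le> card N \<and> g x \<le> card C)"
        using gN gC \<open>x \<in> C\<close> \<open>y \<in> C\<close> by blast
      then have "g x + g y \<le> card C + card N" by linarith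
      then show ?thesis using b_star by (simp add: N_def C_def)
    qed
  qed
  ultimately show ?thesis unfolding bounded_numbering_def by blast
qed

lemma d_sequence_subset:
  assumes ds: "d_sequence V E s W u" and "1 \<le> i" "i \<le> s"
  shows "W i \<subseteq> V"
  using \<open>1 \<le> i\<close> \<open>i \<le> s\<close>
proof (induction i rule: dec_induct)
  case base
  then show ?case using ds by (simp add: d_sequence_def)
next
  case (step n)
  then have "W (Suc n) \<subseteq> W n" using ds by (auto simp: d_sequence_def core_def)
  then show ?case using step by simp
qed

(* Also in the case m K_1, where the core is empty and the truncated subtraction gives 0. *)
lemma dseq_d_last:
  assumes "d_sequence V E s W u"
  shows "dseq_d E s W u s = card (core E (W s)) - 1"
  by (auto simp: dseq_d_def is_mK1_def)

lemma d_sequence_bounded_numbering: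
  assumes sg: "simple_graph V E" and ds: "d_sequence V E s W u" and "1 \<le> i" "i \<le> s"
    and "\<forall>j\<in>{i..s}. 0 \<le> t + (\<Sum>k=i..j. dseq_y E s W u k)"
  shows "\<exists>g. bounded_numbering E (W i) (int (card (W i)) + 1 + t) g"
  \<comment> \<open>t is the remaining slack; the step at i spends y_i of it\<close>
  using \<open>i \<le> s\<close> assms(3,5)
proof (induction i arbitrary: t rule: inc_induct)
  case base
  define C I where "C = core E (W s)" and "I = isol E (W s)"
  have "W s \<subseteq> V" using d_sequence_subset[OF ds] base by simp
  then have "card (W s) = card C + card I"
    using card_core_isol[OF simple_graph_finite[OF sg]] by (simp add: C_def I_def)
  moreover have "0 \<le> t + (int (card I) + 1 - int (card C - 1))"
    using base dseq_d_last[OF ds] by (simp add: dseq_y_def dseq_m_def C_def I_def)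
  ultimately have "2 * int (card C) - 1 \<le> int (card (W s)) + 1 + t" by linarith
  then show ?case using bounded_numbering_core_first[OF sg \<open>W s \<subseteq> V\<close>] by (simp add: C_def)
next
  case (step n)
  define C I N W' where "C = core E (W n)" and "I = isol E (W n)"
    and "N = nbrs E C (u n)" and "W' = W (Suc n)"
  have "W n \<subseteq> V" using d_sequence_subset[OF ds] step by simp
  then have "finite (W n)" using simple_graph_finite[OF sg] by blast
  have un: "u n \<in> C" and W': "W' = C - ({u n} \<union> N)"
    using ds step by (auto simp: d_sequence_def C_def N_def W'_def)
  have y: "dseq_y E s W u n = int (card I) + 1 - int (card N)"
    using step by (simp add: dseq_y_def dseq_m_def dseq_d_def deg_def C_def I_def N_def)
  have "finite C" using \<open>finite (W n)\<close> by (simp add: C_def core_def)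
  have "card (W n) = card C + card I"
    using card_core_isol[OF \<open>finite (W n)\<close>] by (simp add: C_def I_def)
  moreover have "card C = 1 + card N + card W'"
    using card_core_split[OF sg \<open>finite C\<close> un] by (simp add: W' N_def)
  moreover have "0 \<le> t + dseq_y E s W u n" using bspec[OF step.prems(2), of n] step.hyps by simp
  ultimately have b_star: "int (card C + card N) \<le> int (card (W n)) + 1 + t"
    and b_rest: "2 * int (card N) + (int (card W') + 1 + (t + dseq_y E s W u n))
                   \<le> int (card (W n)) + 1 + t"
    using y by linarith+
  have "\<forall>j\<in>{Suc n..s}. 0 \<le> (t + dseq_y E s W u n) + (\<Sum>k=Suc n..j. dseq_y E s W u k)"
  proof
    fix j assume "j \<in> {Suc n..s}"
    then show "0 \<le> (t + dseq_y E s W u n) + (\<Sum>k=Suc n..j. dseq_y E s W u k)"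
      using bspec[OF step.prems(2), of j] step.hyps
      by (simp add: sum.atLeast_Suc_atMost[of n j] add.assoc)
  qed
  then obtain g' where "bounded_numbering E W' (int (card W') + 1 + (t + dseq_y E s W u n)) g'"
    using step.IH step.hyps unfolding W'_def by fastforce
  then show ?case
    using un b_star b_rest unfolding W' C_def N_def
    by (intro bounded_numbering_extend[OF sg \<open>W n \<subseteq> V\<close>])
qed

lemma d_sequence_numbering:
  assumes sg: "simple_graph V E" and ds: "d_sequence V E s W u"
    and z: "\<forall>i\<in>{2..s}. 0 \<le> dseq_z E s W u i"
  shows "\<exists>f. numbering V f \<and>
           (\<forall>x y. {x, y} \<in> E \<longrightarrow> f x + f y \<le> card V + dseq_d E s W u 1)"
proof -
  have "\<forall>j\<in>{1..s}. 0 \<le> (int (dseq_d E s W u 1) - 1) + (\<Sum>k=1..j. dseq_y E s W u k)"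
  proof
    fix j assume j: "j \<in> {1..s}"
    have "(\<Sum>k=1..j. dseq_y E s W u k) = dseq_y E s W u 1 + dseq_z E s W u j"
      unfolding dseq_z_def using j sum.atLeast_Suc_atMost[of 1 j "dseq_y E s W u"] by (simp add: numeral_2_eq_2)
    moreover have "0 \<le> dseq_z E s W u j" using z j by (cases "j = 1") (auto simp: dseq_z_def)
    ultimately show "0 \<le> (int (dseq_d E s W u 1) - 1) + (\<Sum>k=1..j. dseq_y E s W u k)"
      by (simp add: dseq_y_def)
  qed
  moreover have "1 \<le> s" using ds by (simp add: d_sequence_def)
  ultimately obtain f
    where f: "bounded_numbering E (W 1) (int (card (W 1)) + 1 + (int (dseq_d E s W u 1) - 1)) f"
    using d_sequence_bounded_numbering[OF sg ds order.refl] by blast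
  have W1: "W 1 = V" using ds by (simp add: d_sequence_def)
  show ?thesis
  proof (intro exI conjI allI impI)
    show "numbering V f" using f W1 by (simp add: bounded_numbering_def)
    fix x y assume "{x, y} \<in> E"
    moreover have "x \<in> V" "y \<in> V" using simple_graph_edgeD[OF sg \<open>{x, y} \<in> E\<close>] by auto
    ultimately show "f x + f y \<le> card V + dseq_d E s W u 1"
      using f W1 unfolding bounded_numbering_def by force
  qed
qed

theorem mainTheorem5:
  fixes V :: "'a set" and E :: "'a set set" and s :: nat
    and W :: "nat \<Rightarrow> 'a set" and u :: "nat \<Rightarrow> 'a"
  assumes "simple_graph V E"
    and "1 \<le> min_degree V E" and "min_degree V E \<le> card V - 2"
    and "d_sequence V E s W u"
    and "\<forall>i\<in>{2..s}. dseq_z E s W u i \<ge> 0"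
  shows "strength V E \<le> card V + dseq_d E s W u 1 \<and>
         (dseq_d E s W u 1 = min_degree V E \<longrightarrow> strength V E = card V + dseq_d E s W u 1)"
proof -
  note sg = assms(1)
  have "V \<noteq> {}" using assms(2,3) by auto
  then have lower: "card V + min_degree V E \<le> strength V E"
    and "E \<noteq> {}"
    using strength_ge_min_degree edges_nonempty_of_min_degree sg assms(2) by blast+
  obtain f where f: "numbering V f"
    and edges: "\<forall>x y. {x, y} \<in> E \<longrightarrow> f x + f y \<le> card V + dseq_d E s W u 1"
    using d_sequence_numbering[OF sg assms(4,5)] by blast
  have "strength V E \<le> strength_of E f" using strength_le_strength_of[OF sg \<open>E \<noteq> {}\<close> f] .
  also have "\<dots> \<le> card V + dseq_d E s W u 1"
    using edges by (intro strength_of_le[OF sg \<open>E \<noteq> {}\<close>]) blast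
  finally show ?thesis using lower by simp
qed

end
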